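(* Fix $\mathbf{W}>0$ and $f>0$ and consider the tree–grass ODE system \[ \frac{dG}{dt}=g_G(\mathbf{W})G\Big(1-\frac{G}{K_G(\mathbf{W})}\Big)-\delta_G G-\eta_{TG}TG-\lambda_{fG}fG,\qquad \frac{dT}{dt}=g_T(\mathbf{W})T\Big(1-\frac{T}{K_T(\mathbf{W})}\Big)-\delta_T T-f\vartheta(T)\omega(G)T . \] Then: (1) The desert equilibrium $\mathbf{E}_0=(0,0)$ is locally asymptotically stable when $\mathcal{R}^1_{\mathbf{W}}<1$ and $\mathcal{R}^2_{\mathbf{W}}<1$. (2) The grassland equilibrium $\mathbf{E}_G=(G^*,0)$ (which exists when $\mathcal{R}^2_{\mathbf{W}}>1$) is locally asymptotically stable when $\mathcal{R}_G<1$. (3) The forest equilibrium $\mathbf{E}_F=(0,T^* )$ (which exists when $\mathcal{R}^1_{\mathbf{W}}>1$) is locally asymptotically stable when $\mathcal{R}_F<1$.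
   Context: All parameters $\gamma_G,\gamma_T,b_G,b_T,c_G,c_T,d_G,d_T,a_G,a_T,\delta_G,\delta_T,\eta_{TG},\lambda_{fG},\lambda_{fT}^{min},\lambda_{fT}^{max},p,\alpha$ are positive constants, $\lambda_{fT}^{min}<\lambda_{fT}^{max}$. $g_G(\mathbf{W})=\frac{\gamma_G\mathbf{W}}{b_G+\mathbf{W}}$, $g_T(\mathbf{W})=\frac{\gamma_T\mathbf{W}}{b_T+\mathbf{W}}$, $K_G(\mathbf{W})=\frac{c_G}{1+d_Ge^{-a_G\mathbf{W}}}$, $K_T(\mathbf{W})=\frac{c_T}{1+d_Te^{-a_T\mathbf{W}}}$, $\omega(G)=\frac{G^2}{G^2+\alpha^2}$, $\vartheta(T)=\lambda_{fT}^{min}+(\lambda_{fT}^{max}-\lambda_{fT}^{min})e^{-pT}$. Thresholds: $\mathcal{R}^1_{\mathbf{W}}=g_T(\mathbf{W})/\delta_T$, $\mathcal{R}^2_{\mathbf{W}}=g_G(\mathbf{W})/(\delta_G+\lambda_{fG}f)$, $T^*=K_T(\mathbf{W})(1-1/\mathcal{R}^1_{\mathbf{W}})$, $G^*=K_G(\mathbf{W})(1-1/\mathcal{R}^2_{\mathbf{W}})$, $\mathcal{R}_F=\frac{g_G(\mathbf{W})}{\eta_{TG}T^*+\delta_G+\lambda_{fG}f}$, $\mathcal{R}_G=\frac{g_T(\mathbf{W})}{\delta_T+\lambda_{fT}^{max}f\omega(G^* )}$. *)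

theory Defs
  imports "HOL-Analysis.Analysis"
begin

record params =
  gammaG :: real  gammaT :: real
  bG :: real  bT :: real
  cG :: real  cT :: real
  dG :: real  dT :: real
  aG :: real  aT :: real
  deltaG :: real  deltaT :: real
  etaTG :: real
  lamfG :: real
  lamfTmin :: real  lamfTmax :: real
  pp :: real
  alpha :: real

definition params_ok :: "params \<Rightarrow> bool" where
  "params_ok P \<longleftrightarrow> gammaG P > 0 \<and> gammaT P > 0 \<and> bG P > 0 \<and> bT P > 0 \<and>
     cG P > 0 \<and> cT P > 0 \<and> dG P > 0 \<and> dT P > 0 \<and> aG P > 0 \<and> aT P > 0 \<and>
     deltaG P > 0 \<and> deltaT P > 0 \<and> etaTG P > 0 \<and> lamfG P > 0 \<and>
     lamfTmin P > 0 \<and> lamfTmax P > 0 \<and> pp P > 0 \<and> alpha P > 0 \<and>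
     lamfTmin P < lamfTmax P"

definition gG :: "params \<Rightarrow> real \<Rightarrow> real" where
  "gG P W = gammaG P * W / (bG P + W)"
definition gT :: "params \<Rightarrow> real \<Rightarrow> real" where
  "gT P W = gammaT P * W / (bT P + W)"
definition KG :: "params \<Rightarrow> real \<Rightarrow> real" where
  "KG P W = cG P / (1 + dG P * exp (- aG P * W))"
definition KT :: "params \<Rightarrow> real \<Rightarrow> real" where
  "KT P W = cT P / (1 + dT P * exp (- aT P * W))"
definition omega :: "params \<Rightarrow> real \<Rightarrow> real" where
  "omega P G = G^2 / (G^2 + (alpha P)^2)"
definition vartheta :: "params \<Rightarrow> real \<Rightarrow> real" where
  "vartheta P T = lamfTmin P + (lamfTmax P - lamfTmin P) * exp (- pp P * T)"

definition R1W :: "params \<Rightarrow> real \<Rightarrow> real" where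
  "R1W P W = gT P W / deltaT P"
definition R2W :: "params \<Rightarrow> real \<Rightarrow> real \<Rightarrow> real" where
  "R2W P W f = gG P W / (deltaG P + lamfG P * f)"
definition Tstar :: "params \<Rightarrow> real \<Rightarrow> real" where
  "Tstar P W = KT P W * (1 - 1 / R1W P W)"
definition Gstar :: "params \<Rightarrow> real \<Rightarrow> real \<Rightarrow> real" where
  "Gstar P W f = KG P W * (1 - 1 / R2W P W f)"
definition RF :: "params \<Rightarrow> real \<Rightarrow> real \<Rightarrow> real" where
  "RF P W f = gG P W / (etaTG P * Tstar P W + deltaG P + lamfG P * f)"
definition RG :: "params \<Rightarrow> real \<Rightarrow> real \<Rightarrow> real" where
  "RG P W f = gT P W / (deltaT P + lamfTmax P * f * omega P (Gstar P W f))"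

definition field :: "params \<Rightarrow> real \<Rightarrow> real \<Rightarrow> real \<times> real \<Rightarrow> real \<times> real" where
  "field P W f z = (let G = fst z; T = snd z in
     (gG P W * G * (1 - G / KG P W) - deltaG P * G - etaTG P * T * G - lamfG P * f * G,
      gT P W * T * (1 - T / KT P W) - deltaT P * T - f * vartheta P T * omega P G * T))"

definition is_solution :: "(('a::real_normed_vector) \<Rightarrow> 'a) \<Rightarrow> 'a \<Rightarrow> (real \<Rightarrow> 'a) \<Rightarrow> bool" where
  "is_solution F x0 x \<longleftrightarrow> x 0 = x0 \<and>
     (\<forall>t\<ge>0. (x has_vector_derivative F (x t)) (at t within {0..}))"

definition lyapunov_stable :: "(('a::real_normed_vector) \<Rightarrow> 'a) \<Rightarrow> 'a \<Rightarrow> bool" where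
  "lyapunov_stable F e \<longleftrightarrow>
     (\<forall>\<epsilon>>0. \<exists>\<delta>>0. \<forall>x0 x. dist x0 e < \<delta> \<and> is_solution F x0 x \<longrightarrow>
        (\<forall>t\<ge>0. dist (x t) e < \<epsilon>))"

definition loc_asymp_stable :: "(('a::real_normed_vector) \<Rightarrow> 'a) \<Rightarrow> 'a \<Rightarrow> bool" where
  "loc_asymp_stable F e \<longleftrightarrow> F e = 0 \<and> lyapunov_stable F e \<and>
     (\<exists>\<delta>>0. \<forall>x0. dist x0 e < \<delta> \<longrightarrow>
        (\<exists>x. is_solution F x0 x) \<and> (\<forall>x. is_solution F x0 x \<longrightarrow> (x \<longlongrightarrow> e) at_top))"

end

(* At each of the three equilibria the field is triangular: one component is a multiple of the
   distance to a coordinate line through the equilibrium, and the threshold conditions make both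
   diagonal entries of the linearisation negative. A weighted quadratic form
   K p^2 + u^2, with K large enough to absorb the off-diagonal coupling, is then a strict Lyapunov
   function on a small ball, V' <= - m V. Exponential decay of V along solutions gives stability and
   convergence; solutions exist because the field is locally Lipschitz, so after truncating it by the
   projection onto the ball a weighted Picard iteration yields a global solution, which never leaves
   the sublevel set and hence solves the original system. *)

theory Submission
  imports Defs
begin

section \<open>Global solutions of bounded Lipschitz fields\<close>

lemma integral_from_zero_has_vector_derivative:
  fixes g :: "real \<Rightarrow> 'a::banach"
  assumes "continuous_on UNIV g" and "s \<ge> 0"
  shows "((\<lambda>s. integral {0..s} g) has_vector_derivative g s) (at s within {0..})"
proof -
  have "((\<lambda>s. integral {0..s} g) has_vector_derivative g s) (at s within {0..s+1})"
    by (rule integral_has_vector_derivative[OF continuous_on_subset[OF assms(1)]]) (use assms(2) in auto)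
  moreover have "at s within {0..s+1} = at s within {0..}"
    by (rule at_within_nhd[of s "{..<s+1}"]) auto
  ultimately show ?thesis by simp
qed

text \<open>The Picard operator conjugated by the weight \<open>exp (- k t)\<close> (Bielecki's trick): for \<open>k\<close>
  large compared with the Lipschitz constant it is a contraction in the sup norm on \<open>[0, \<infinity>)\<close>.\<close>
definition weighted_picard :: "('a::banach \<Rightarrow> 'a) \<Rightarrow> real \<Rightarrow> 'a \<Rightarrow> (real \<Rightarrow> 'a) \<Rightarrow> real \<Rightarrow> 'a" where
  "weighted_picard G k x0 y t =
     exp (- k * max 0 t) *\<^sub>R (x0 + integral {0..max 0 t} (\<lambda>u. G (exp (k * u) *\<^sub>R y u)))"

lemma weighted_picard_bcontfun:
  fixes G :: "'a::banach \<Rightarrow> 'a"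
  assumes G: "continuous_on UNIV G" and bnd: "\<And>z. norm (G z) \<le> M" and k: "k > 0"
    and y: "continuous_on UNIV y"
  shows "weighted_picard G k x0 y \<in> bcontfun"
proof -
  define g where "g = (\<lambda>u. G (exp (k * u) *\<^sub>R y u))"
  define I where "I s = integral {0..s} g" for s
  have g: "continuous_on UNIV g"
    unfolding g_def by (intro continuous_on_compose2[OF G] continuous_intros y) auto
  have "continuous_on {0..} I"
    unfolding continuous_on_eq_continuous_within I_def
    using integral_from_zero_has_vector_derivative[OF g] has_vector_derivative_continuous
    by (metis atLeast_iff)
  then have "continuous_on UNIV (\<lambda>t. I (max 0 t))"
    by (rule continuous_on_compose2) (auto intro!: continuous_intros)
  then have cont: "continuous_on UNIV (weighted_picard G k x0 y)"
    unfolding weighted_picard_def g_def[symmetric] I_def[symmetric]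
    by (intro continuous_intros)
  have M: "M \<ge> 0" using bnd[of 0] norm_ge_zero[of "G 0"] by linarith
  show ?thesis
  proof (rule bcontfun_normI[OF cont])
    fix t :: real
    define s where "s = max 0 t"
    have s: "s \<ge> 0" by (simp add: s_def)
    have I: "norm (I s) \<le> M * s"
    proof -
      have "norm (I s) \<le> integral {0..s} (\<lambda>_. M)"
        unfolding I_def using bnd
        by (intro integral_norm_bound_integral integrable_continuous_interval continuous_on_subset[OF g]) (auto simp: g_def)
      then show ?thesis using s by (simp add: mult.commute)
    qed
    have "k * s < exp (k * s)"
      using exp_ge_add_one_self[of "k * s"] by linarith
    then have e: "exp (- k * s) * s \<le> 1 / k"
      using k by (simp add: exp_minus field_simps)
    have "norm (weighted_picard G k x0 y t) = exp (- k * s) * norm (x0 + I s)"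
      by (simp add: weighted_picard_def s_def I_def g_def)
    also have "\<dots> \<le> exp (- k * s) * (norm x0 + M * s)"
      using norm_triangle_ineq[of x0 "I s"] I by (intro mult_left_mono) auto
    also have "\<dots> = exp (- k * s) * norm x0 + M * (exp (- k * s) * s)"
      by (simp add: algebra_simps)
    also have "\<dots> \<le> norm x0 + M * (1 / k)"
      using s k M e by (intro add_mono mult_left_mono mult_left_le_one_le) simp_all
    finally show "norm (weighted_picard G k x0 y t) \<le> norm x0 + M * (1 / k)" .
  qed
qed

lemma weighted_picard_dist:
  fixes G :: "'a::banach \<Rightarrow> 'a" and y1 y2 :: "(real, 'a) bcontfun"
  assumes lip: "L-lipschitz_on UNIV G" and k: "k > 0"
  shows "dist (weighted_picard G k x0 y1 t) (weighted_picard G k x0 y2 t) \<le> L / k * dist y1 y2"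
proof -
  define s where "s = max 0 t"
  have s: "s \<ge> 0" by (simp add: s_def)
  define D where "D = dist y1 y2"
  define g where "g = (\<lambda>y :: (real, 'a) bcontfun. \<lambda>u. G (exp (k * u) *\<^sub>R y u))"
  have L: "L \<ge> 0" using lipschitz_on_nonneg[OF lip] .
  have int: "g y integrable_on {0..s}" for y
    unfolding g_def
    by (intro integrable_continuous_interval continuous_on_compose2[OF lipschitz_on_continuous_on[OF lip]])
      (auto intro!: continuous_intros)
  have ptw: "norm (g y1 u - g y2 u) \<le> L * D * exp (k * u)" for u
  proof -
    have "norm (g y1 u - g y2 u) \<le> L * dist (exp (k * u) *\<^sub>R y1 u) (exp (k * u) *\<^sub>R y2 u)"
      unfolding g_def dist_norm[symmetric] by (rule lipschitz_onD[OF lip]) auto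
    also have "\<dots> = L * (exp (k * u) * dist (y1 u) (y2 u))"
      by (simp add: dist_norm scaleR_diff_right[symmetric])
    also have "\<dots> \<le> L * (exp (k * u) * D)"
      unfolding D_def using L by (intro mult_left_mono dist_bounded) auto
    finally show ?thesis by (simp add: algebra_simps)
  qed
  have "((\<lambda>u. L * D * exp (k * u)) has_integral (L * D / k * exp (k * s) - L * D / k * exp (k * 0))) {0..s}"
    by (rule fundamental_theorem_of_calculus[OF s])
      (use k in \<open>auto intro!: derivative_eq_intros simp: has_real_derivative_iff_has_vector_derivative[symmetric]\<close>)
  then have exp_int: "((\<lambda>u. L * D * exp (k * u)) has_integral (L * D / k * (exp (k * s) - 1))) {0..s}"
    by (simp add: algebra_simps)
  have "norm (integral {0..s} (g y1) - integral {0..s} (g y2)) = norm (integral {0..s} (\<lambda>u. g y1 u - g y2 u))"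
    using int by (simp add: integral_diff)
  also have "\<dots> \<le> integral {0..s} (\<lambda>u. L * D * exp (k * u))"
    using exp_int ptw by (intro integral_norm_bound_integral integrable_diff int) auto
  also have "\<dots> = L * D / k * (exp (k * s) - 1)"
    using integral_unique[OF exp_int] .
  finally have I: "norm (integral {0..s} (g y1) - integral {0..s} (g y2)) \<le> L * D / k * (exp (k * s) - 1)" .
  have "dist (weighted_picard G k x0 y1 t) (weighted_picard G k x0 y2 t)
      = exp (- k * s) * norm (integral {0..s} (g y1) - integral {0..s} (g y2))"
    by (simp add: weighted_picard_def s_def g_def dist_norm scaleR_diff_right[symmetric])
  also have "\<dots> \<le> exp (- k * s) * (L * D / k * (exp (k * s) - 1))"
    using I by (intro mult_left_mono) auto
  also have "\<dots> = L * D / k * (1 - exp (- k * s))"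
    by (simp add: algebra_simps exp_minus)
  also have "\<dots> \<le> L * D / k"
    using L k s by (intro mult_left_le) (auto simp: D_def)
  finally show ?thesis by (simp add: D_def)
qed

lemma weighted_picard_fixpoint_is_solution:
  fixes G :: "'a::banach \<Rightarrow> 'a"
  assumes G: "continuous_on UNIV G" and y: "continuous_on UNIV y"
    and fixpoint: "weighted_picard G k x0 y = y"
  shows "is_solution G x0 (\<lambda>t. exp (k * t) *\<^sub>R y t)"
proof -
  define x where "x = (\<lambda>t. exp (k * t) *\<^sub>R y t)"
  define g where "g = (\<lambda>u. G (x u))"
  have g: "continuous_on UNIV g"
    unfolding g_def x_def by (intro continuous_on_compose2[OF G] continuous_intros y) auto
  have x: "x t = x0 + integral {0..t} g" if "t \<ge> 0" for t
  proof -
    have "y t = exp (- k * t) *\<^sub>R (x0 + integral {0..t} g)"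
      using fun_cong[OF fixpoint, of t] that by (simp add: weighted_picard_def x_def g_def)
    then show ?thesis by (simp add: x_def exp_add[symmetric])
  qed
  have "is_solution G x0 x"
    unfolding is_solution_def
  proof (intro conjI allI impI)
    show "x 0 = x0" using x[of 0] by simp
    fix t :: real assume t: "t \<ge> 0"
    have "((\<lambda>t. x0 + integral {0..t} g) has_vector_derivative g t) (at t within {0..})"
      using integral_from_zero_has_vector_derivative[OF g t] by (auto intro!: derivative_eq_intros)
    then show "(x has_vector_derivative G (x t)) (at t within {0..})"
      unfolding g_def by (rule has_vector_derivative_transform[rotated 2]) (use t x in \<open>auto simp: g_def\<close>)
  qed
  then show ?thesis by (simp add: x_def)
qed

lemma exists_solution_bounded_lipschitz:
  fixes G :: "'a::banach \<Rightarrow> 'a"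
  assumes lip: "L-lipschitz_on UNIV G" and bnd: "\<And>z. norm (G z) \<le> M"
  shows "\<exists>x. is_solution G x0 x"
proof -
  define k where "k = 2 * L + 1"
  have L: "L \<ge> 0" using lipschitz_on_nonneg[OF lip] .
  then have k: "k > 0" by (simp add: k_def)
  have G: "continuous_on UNIV G" using lipschitz_on_continuous_on[OF lip] .
  define Phi where "Phi y = Bcontfun (weighted_picard G k x0 (apply_bcontfun y))" for y
  have Phi: "apply_bcontfun (Phi y) = weighted_picard G k x0 y" for y
    unfolding Phi_def
    by (intro Bcontfun_inverse weighted_picard_bcontfun[OF G bnd k]) (auto intro: continuous_on_subset)
  have "dist (Phi y1) (Phi y2) \<le> 1 / 2 * dist y1 y2" for y1 y2
  proof (rule dist_bound)
    fix t
    have "L / k \<le> 1 / 2" using L by (simp add: k_def field_simps)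
    then have "L / k * dist y1 y2 \<le> 1 / 2 * dist y1 y2" by (intro mult_right_mono) auto
    then show "dist (Phi y1 t) (Phi y2 t) \<le> 1 / 2 * dist y1 y2"
      unfolding Phi using weighted_picard_dist[OF lip k, of x0 y1 t y2] by linarith
  qed
  then obtain y where "Phi y = y"
    using banach_fix_type[of "1/2" Phi] by auto
  then have "weighted_picard G k x0 y = y" using Phi by metis
  then show ?thesis
    using weighted_picard_fixpoint_is_solution[OF G] by (blast intro: continuous_on_subset)
qed

section \<open>Strict quadratic Lyapunov functions\<close>

lemma exp_decay_if_deriv_le:
  fixes \<phi> \<phi>' :: "real \<Rightarrow> real"
  assumes T: "T \<ge> 0" and cont: "continuous_on {0..T} \<phi>"
    and der: "\<And>s. 0 < s \<Longrightarrow> s < T \<Longrightarrow> (\<phi> has_real_derivative \<phi>' s) (at s)"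
    and decay: "\<And>s. 0 < s \<Longrightarrow> s < T \<Longrightarrow> \<phi>' s \<le> - m * \<phi> s"
  shows "\<phi> T \<le> \<phi> 0 * exp (- m * T)"
proof -
  have "\<phi> T * exp (m * T) \<le> \<phi> 0 * exp (m * 0)"
  proof (rule DERIV_nonpos_imp_decreasing_open[OF T])
    fix s assume s: "0 < s" "s < T"
    have "((\<lambda>s. \<phi> s * exp (m * s)) has_real_derivative (\<phi>' s + m * \<phi> s) * exp (m * s)) (at s)"
      by (auto intro!: derivative_eq_intros der s simp: algebra_simps)
    moreover have "(\<phi>' s + m * \<phi> s) * exp (m * s) \<le> 0"
      using decay[OF s] by (intro mult_nonpos_nonneg) auto
    ultimately show "\<exists>y. ((\<lambda>s. \<phi> s * exp (m * s)) has_real_derivative y) (at s) \<and> y \<le> 0"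
      by blast
  qed (intro continuous_intros cont)
  then show ?thesis by (simp add: exp_minus field_simps)
qed

text \<open>While \<open>\<phi>\<close> stays below \<open>\<rho>\<close> it decays, so it can never climb back up to \<open>\<rho>\<close>: at the first time
  it reaches \<open>(\<phi> 0 + \<rho>) / 2\<close> it would already be below \<open>\<phi> 0\<close>.\<close>
lemma exp_decay_below_threshold:
  fixes \<phi> \<phi>' :: "real \<Rightarrow> real"
  assumes der: "\<And>t. t \<ge> 0 \<Longrightarrow> (\<phi> has_real_derivative \<phi>' t) (at t within {0..})"
    and decay: "\<And>t. t \<ge> 0 \<Longrightarrow> \<phi> t \<le> \<rho> \<Longrightarrow> \<phi>' t \<le> - m * \<phi> t"
    and \<phi>0: "0 \<le> \<phi> 0" "\<phi> 0 < \<rho>" and m: "m \<ge> 0" and t: "t \<ge> 0"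
  shows "\<phi> t \<le> \<phi> 0 * exp (- m * t)"
proof -
  have cont: "continuous_on {0..} \<phi>"
    unfolding continuous_on_eq_continuous_within
    using der DERIV_continuous by (metis atLeast_iff)
  have der_at: "(\<phi> has_real_derivative \<phi>' s) (at s)" if "s > 0" for s
    using der[of s] at_within_interior[of s "{0..}"] that by simp
  have decay_up_to: "\<phi> T \<le> \<phi> 0 * exp (- m * T)"
    if "T \<ge> 0" and below: "\<And>s. 0 < s \<Longrightarrow> s < T \<Longrightarrow> \<phi> s \<le> \<rho>" for T
    using that(1) continuous_on_subset[OF cont] der_at decay below
    by (intro exp_decay_if_deriv_le) auto
  define \<rho>' where "\<rho>' = (\<phi> 0 + \<rho>) / 2"
  have "\<phi> s < \<rho>'" if "s \<ge> 0" for s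
  proof (rule ccontr)
    define S where "S = {0..} \<inter> \<phi> -` {\<rho>'..}"
    assume "\<not> \<phi> s < \<rho>'"
    then have "s \<in> S" using that by (auto simp: S_def)
    moreover have "closed S"
      unfolding S_def by (rule continuous_closed_preimage[OF cont]) auto
    moreover have bdd: "bdd_below S" by (auto simp: S_def bdd_below_def)
    ultimately have first: "Inf S \<in> S"
      using closed_contains_Inf by blast
    have "\<phi> s' \<le> \<rho>" if "0 < s'" "s' < Inf S" for s'
    proof -
      have "s' \<notin> S" using cInf_lower[OF _ bdd, of s'] that by force
      then show ?thesis using that \<phi>0 by (auto simp: S_def \<rho>'_def)
    qed
    then have "\<phi> (Inf S) \<le> \<phi> 0 * exp (- m * Inf S)"
      using first by (intro decay_up_to) (auto simp: S_def)
    also have "\<dots> \<le> \<phi> 0"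
      using first \<phi>0 m by (intro mult_left_le) (auto simp: S_def)
    finally show False using first \<phi>0 by (auto simp: S_def \<rho>'_def)
  qed
  moreover have "\<rho>' < \<rho>" using \<phi>0 by (simp add: \<rho>'_def)
  ultimately show ?thesis
    by (intro decay_up_to[OF t]) (metis less_eq_real_def less_trans)
qed

lemma lyapunov_decay_along_solution:
  fixes F :: "'a::real_normed_vector \<Rightarrow> 'a" and V :: "'a \<Rightarrow> real"
  assumes sol: "is_solution F x0 x"
    and V': "\<And>z. (V has_derivative V' z) (at z)"
    and nonneg: "\<And>z. V z \<ge> 0"
    and decay: "\<And>z. V z \<le> \<rho> \<Longrightarrow> V' z (F z) \<le> - m * V z"
    and "V x0 < \<rho>" and "m \<ge> 0" and "t \<ge> 0"
  shows "V (x t) \<le> V x0 * exp (- m * t)"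
proof -
  have "((\<lambda>t. V (x t)) has_real_derivative V' (x t) (F (x t))) (at t within {0..})" if "t \<ge> 0" for t
  proof -
    have "(x has_derivative (\<lambda>h. h *\<^sub>R F (x t))) (at t within {0..})"
      using sol that by (simp add: is_solution_def has_vector_derivative_def)
    from has_derivative_compose[OF this V']
    have "((\<lambda>t. V (x t)) has_derivative (\<lambda>h. V' (x t) (h *\<^sub>R F (x t)))) (at t within {0..})" .
    moreover have "(\<lambda>h. V' (x t) (h *\<^sub>R F (x t))) = (*) (V' (x t) (F (x t)))"
      using linear_scale[OF has_derivative_linear[OF V']] by (simp add: fun_eq_iff)
    ultimately show ?thesis
      by (simp add: has_field_derivative_def)
  qed
  moreover have "x 0 = x0" using sol by (simp add: is_solution_def)
  ultimately show ?thesis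
    using exp_decay_below_threshold[of "\<lambda>t. V (x t)" "\<lambda>t. V' (x t) (F (x t))" \<rho> m t] decay nonneg assms
    by simp
qed

locale quadratic_lyapunov =
  fixes F :: "'a::euclidean_space \<Rightarrow> 'a" and e :: 'a and r L :: real
    and V :: "'a \<Rightarrow> real" and V' :: "'a \<Rightarrow> 'a \<Rightarrow> real" and c C m :: real
  assumes lipschitz: "L-lipschitz_on (cball e r) F" and equilibrium: "F e = 0" and r_pos: "r > 0"
    and V_has_derivative: "\<And>z. (V has_derivative V' z) (at z)"
    and V_lower: "\<And>z. c * (dist z e)\<^sup>2 \<le> V z" and V_upper: "\<And>z. V z \<le> C * (dist z e)\<^sup>2"
    and c_pos: "c > 0" and C_pos: "C > 0" and m_pos: "m > 0"
    and V_decreasing: "\<And>z. z \<in> cball e r \<Longrightarrow> V' z (F z) \<le> - m * V z"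
begin

lemma V_nonneg: "V z \<ge> 0"
proof -
  have "0 \<le> c * (dist z e)\<^sup>2" using c_pos by simp
  then show ?thesis using V_lower[of z] by linarith
qed

lemma dist_less_if_V_less:
  assumes "V z < c * \<mu>\<^sup>2" and "\<mu> > 0"
  shows "dist z e < \<mu>"
proof -
  have "c * (dist z e)\<^sup>2 < c * \<mu>\<^sup>2" using V_lower[of z] assms(1) by linarith
  then show ?thesis using c_pos assms(2) by (simp add: power_less_imp_less_base)
qed

lemma V_less_if_dist_less:
  assumes "dist z e < \<mu> * sqrt (c / C)" and "\<mu> > 0"
  shows "V z < c * \<mu>\<^sup>2"
proof -
  have "(dist z e)\<^sup>2 < (\<mu> * sqrt (c / C))\<^sup>2"
    using assms by (intro power_strict_mono) auto
  then have "(dist z e)\<^sup>2 < \<mu>\<^sup>2 * c / C"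
    using c_pos C_pos by (simp add: power_mult_distrib)
  then have "C * (dist z e)\<^sup>2 < c * \<mu>\<^sup>2"
    using C_pos by (simp add: pos_less_divide_eq mult.commute)
  then show ?thesis using V_upper[of z] by linarith
qed

lemma sublevel_subset_cball:
  assumes "V z \<le> c * r\<^sup>2"
  shows "z \<in> cball e r"
proof -
  have "c * (dist z e)\<^sup>2 \<le> c * r\<^sup>2" using V_lower[of z] assms by linarith
  then show ?thesis using c_pos r_pos by (simp add: dist_commute power2_le_iff_abs_le)
qed

lemma V_decay:
  assumes "is_solution F x0 x" and "V x0 < c * r\<^sup>2" and "t \<ge> 0"
  shows "V (x t) \<le> V x0 * exp (- m * t)"
  using lyapunov_decay_along_solution[OF assms(1) V_has_derivative V_nonneg _ assms(2)]
    V_decreasing sublevel_subset_cball m_pos assms(3) by simp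

lemma V_bounded_along_solution:
  assumes "is_solution F x0 x" and "V x0 < c * r\<^sup>2" and "t \<ge> 0"
  shows "V (x t) \<le> V x0"
  using V_decay[OF assms] assms(3) m_pos V_nonneg[of x0] mult_left_le[of "exp (- m * t)" "V x0"] by simp

text \<open>\<open>F\<close> is replaced by its composition with the projection onto the ball, which is globally Lipschitz
  and bounded; a solution of the truncated field never leaves the sublevel set, so it solves the original.\<close>
lemma solution_exists:
  assumes x0: "V x0 < c * r\<^sup>2"
  shows "\<exists>x. is_solution F x0 x"
proof -
  define P where "P = closest_point (cball e r)"
  have P: "P z \<in> cball e r" for z
    unfolding P_def by (rule closest_point_in_set) (use r_pos in auto)
  have P_self: "P z = z" if "z \<in> cball e r" for z
    unfolding P_def using that by (rule closest_point_self)
  have "1-lipschitz_on UNIV P"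
    unfolding P_def by (rule lipschitz_onI) (use r_pos in \<open>auto intro: closest_point_lipschitz\<close>)
  then have "(L * 1)-lipschitz_on UNIV (\<lambda>z. F (P z))"
    by (rule lipschitz_on_compose2[OF _ lipschitz_on_subset[OF lipschitz]]) (use P in auto)
  moreover have "norm (F (P z)) \<le> L * r" for z
  proof -
    have "norm (F (P z)) \<le> L * dist (P z) e"
      using lipschitz_onD[OF lipschitz P, of e] r_pos equilibrium by (simp add: dist_norm)
    also have "\<dots> \<le> L * r"
      using P[of z] lipschitz_on_nonneg[OF lipschitz] by (intro mult_left_mono) (auto simp: dist_commute)
    finally show ?thesis .
  qed
  ultimately obtain x where sol: "is_solution (\<lambda>z. F (P z)) x0 x"
    using exists_solution_bounded_lipschitz by blast
  have "V' z (F (P z)) \<le> - m * V z" if "V z \<le> c * r\<^sup>2" for z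
    using V_decreasing sublevel_subset_cball P_self that by simp
  from lyapunov_decay_along_solution[OF sol V_has_derivative V_nonneg this x0]
  have "V (x t) \<le> V x0" if "t \<ge> 0" for t
    using m_pos that V_nonneg[of x0] mult_left_le[of "exp (- m * t)" "V x0"] by fastforce
  then have "P (x t) = x t" if "t \<ge> 0" for t
    using that x0 sublevel_subset_cball P_self by fastforce
  then have "is_solution F x0 x"
    using sol unfolding is_solution_def by simp
  then show ?thesis by blast
qed

lemma stable: "lyapunov_stable F e"
  unfolding lyapunov_stable_def
proof (intro allI impI)
  fix \<epsilon> :: real assume \<epsilon>: "\<epsilon> > 0"
  have "dist (x t) e < \<epsilon>"
    if "dist x0 e < min r \<epsilon> * sqrt (c / C)" "is_solution F x0 x" "t \<ge> 0" for x0 x t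
  proof -
    have "V x0 < c * (min r \<epsilon>)\<^sup>2" using V_less_if_dist_less that(1) r_pos \<epsilon> by simp
    moreover have "c * (min r \<epsilon>)\<^sup>2 \<le> c * r\<^sup>2"
      using c_pos r_pos \<epsilon> by (intro mult_left_mono power_mono) auto
    ultimately have "V (x t) < c * (min r \<epsilon>)\<^sup>2"
      using V_bounded_along_solution[OF that(2) _ that(3)] by fastforce
    then show ?thesis using dist_less_if_V_less r_pos \<epsilon> by fastforce
  qed
  moreover have "min r \<epsilon> * sqrt (c / C) > 0" using r_pos \<epsilon> c_pos C_pos by simp
  ultimately show "\<exists>\<delta>>0. \<forall>x0 x. dist x0 e < \<delta> \<and> is_solution F x0 x \<longrightarrow> (\<forall>t\<ge>0. dist (x t) e < \<epsilon>)"
    by blast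
qed

lemma solution_tendsto:
  assumes sol: "is_solution F x0 x" and x0: "V x0 < c * r\<^sup>2"
  shows "(x \<longlongrightarrow> e) at_top"
proof -
  have "((\<lambda>t. sqrt (V x0 * exp (- m * t) / c)) \<longlongrightarrow> sqrt (V x0 * 0 / c)) at_top"
    using m_pos c_pos by (intro tendsto_intros filterlim_compose[OF exp_at_bot]
        filterlim_tendsto_neg_mult_at_bot[OF tendsto_const _ filterlim_ident]) simp_all
  then have lim: "((\<lambda>t. sqrt (V x0 * exp (- m * t) / c)) \<longlongrightarrow> 0) at_top"
    by simp
  have "\<forall>\<^sub>F t in at_top. dist (x t) e \<le> sqrt (V x0 * exp (- m * t) / c)"
  proof (rule eventually_at_top_linorderI[of 0])
    fix t :: real assume t: "t \<ge> 0"
    have "c * (dist (x t) e)\<^sup>2 \<le> V x0 * exp (- m * t)"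
      using V_lower[of "x t"] V_decay[OF sol x0 t] by simp
    then show "dist (x t) e \<le> sqrt (V x0 * exp (- m * t) / c)"
      using c_pos by (simp add: real_le_rsqrt field_simps)
  qed
  from tendsto_sandwich[OF _ this tendsto_const lim]
  have "((\<lambda>t. dist (x t) e) \<longlongrightarrow> 0) at_top" by simp
  then show ?thesis using tendsto_dist_iff[of x e at_top] by simp
qed

theorem loc_asymp_stable: "loc_asymp_stable F e"
proof -
  have "V x0 < c * r\<^sup>2" if "dist x0 e < r * sqrt (c / C)" for x0
    using V_less_if_dist_less that r_pos by blast
  moreover have "r * sqrt (c / C) > 0" using r_pos c_pos C_pos by simp
  ultimately show ?thesis
    unfolding loc_asymp_stable_def using equilibrium stable solution_exists solution_tendsto by blast
qed

end

section \<open>Triangular planar systems\<close>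

text \<open>The cross term is absorbed by Young's inequality \<open>2 u \<beta> p \<le> a u\<^sup>2 + b\<^sup>2 p\<^sup>2 / a\<close>; the weight \<open>K\<close>
  on the stable direction \<open>p\<close> is chosen large enough to pay for the second summand.\<close>
lemma triangular_quadratic_form_le:
  fixes p u \<alpha> \<beta> \<gamma> a b g :: real
  assumes a: "a > 0" and g: "g > 0" and \<alpha>: "\<alpha> \<ge> a" and \<beta>: "\<bar>\<beta>\<bar> \<le> b" and \<gamma>: "\<gamma> \<le> - g"
  defines "K \<equiv> b\<^sup>2 / (a * g) + 1"
  shows "2 * K * p * (\<gamma> * p) + 2 * u * (- \<alpha> * u + \<beta> * p) \<le> - min a g * (K * p\<^sup>2 + u\<^sup>2)"
proof -
  define \<mu> where "\<mu> = min a g"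
  have K: "K > 0" unfolding K_def using a g by (simp add: add_nonneg_pos)
  have "2 * u * (\<beta> * p) \<le> \<bar>2 * u * (\<beta> * p)\<bar>" by simp
  also have "\<dots> = 2 * (\<bar>u\<bar> * \<bar>p\<bar>) * \<bar>\<beta>\<bar>"
    by (simp add: abs_mult)
  also have "\<dots> \<le> 2 * (\<bar>u\<bar> * \<bar>p\<bar>) * b"
    using \<beta> by (intro mult_left_mono) auto
  also have "\<dots> \<le> a * u\<^sup>2 + b\<^sup>2 / a * p\<^sup>2"
  proof -
    have "0 \<le> (a * \<bar>u\<bar> - b * \<bar>p\<bar>)\<^sup>2 / a" using a by simp
    also have "\<dots> = a * u\<^sup>2 + b\<^sup>2 / a * p\<^sup>2 - 2 * (\<bar>u\<bar> * \<bar>p\<bar>) * b"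
      using a by (simp add: field_simps power2_eq_square)
    finally show ?thesis by simp
  qed
  also have "b\<^sup>2 / a = K * g - g"
    using a g unfolding K_def by (simp add: field_simps)
  finally have young: "2 * u * (\<beta> * p) \<le> a * u\<^sup>2 + (K * g - g) * p\<^sup>2" .
  have "K * p\<^sup>2 * \<gamma> \<le> - (K * p\<^sup>2 * g)"
    using mult_left_mono[OF \<gamma>, of "K * p\<^sup>2"] K by simp
  moreover have "u\<^sup>2 * a \<le> u\<^sup>2 * \<alpha>"
    using \<alpha> by (intro mult_left_mono) auto
  moreover have "u\<^sup>2 * \<mu> \<le> u\<^sup>2 * a" and "K * p\<^sup>2 * \<mu> \<le> K * p\<^sup>2 * g"
    using K by (intro mult_left_mono; simp add: \<mu>_def)+
  moreover have "0 \<le> g * p\<^sup>2" using g by simp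
  moreover have "a * u\<^sup>2 = u\<^sup>2 * a" by simp
  moreover have "2 * K * p * (\<gamma> * p) + 2 * u * (- \<alpha> * u + \<beta> * p)
      = 2 * (K * p\<^sup>2 * \<gamma>) - 2 * (u\<^sup>2 * \<alpha>) + 2 * u * (\<beta> * p)"
    by (simp add: algebra_simps power2_eq_square)
  moreover have "- \<mu> * (K * p\<^sup>2 + u\<^sup>2) = - (K * p\<^sup>2 * \<mu>) - u\<^sup>2 * \<mu>"
    by (simp add: algebra_simps)
  moreover have "(K * g - g) * p\<^sup>2 = K * p\<^sup>2 * g - g * p\<^sup>2"
    by (simp add: algebra_simps)
  ultimately show ?thesis using young unfolding \<mu>_def[symmetric] by linarith
qed

lemma triangular_lyapunov_near:
  fixes p u \<alpha> \<beta> \<gamma> :: "'a::metric_space \<Rightarrow> real"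
  assumes "isCont \<alpha> e" and "isCont \<beta> e" and "isCont \<gamma> e" and "\<alpha> e > 0" and "\<gamma> e < 0"
  obtains K m r where "K > 0" and "m > 0" and "r > 0" and
    "\<And>z. z \<in> cball e r \<Longrightarrow>
       2 * K * p z * (\<gamma> z * p z) + 2 * u z * (- \<alpha> z * u z + \<beta> z * p z) \<le> - m * (K * (p z)\<^sup>2 + (u z)\<^sup>2)"
proof -
  define a where "a = \<alpha> e / 2"
  define b where "b = \<bar>\<beta> e\<bar> + 1"
  define g where "g = - \<gamma> e / 2"
  have ag: "a > 0" "g > 0" using assms(4,5) by (auto simp: a_def g_def)
  have lim: "(\<alpha> \<longlongrightarrow> \<alpha> e) (nhds e)" "((\<lambda>z. \<bar>\<beta> z\<bar>) \<longlongrightarrow> \<bar>\<beta> e\<bar>) (nhds e)" "(\<gamma> \<longlongrightarrow> \<gamma> e) (nhds e)"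
    using assms(1-3) by (auto simp: isCont_def tendsto_at_iff_tendsto_nhds intro: tendsto_rabs)
  have "\<forall>\<^sub>F z in nhds e. a < \<alpha> z \<and> \<bar>\<beta> z\<bar> < b \<and> \<gamma> z < - g"
    using order_tendstoD(1)[OF lim(1), of a] order_tendstoD(2)[OF lim(2), of b]
      order_tendstoD(2)[OF lim(3), of "- g"] assms(4,5)
    by (intro eventually_conj) (auto simp: a_def b_def g_def)
  then obtain d where d: "d > 0" and near: "\<And>z. dist z e < d \<Longrightarrow> a < \<alpha> z \<and> \<bar>\<beta> z\<bar> < b \<and> \<gamma> z < - g"
    unfolding eventually_nhds_metric by blast
  show ?thesis
  proof (rule that)
    show "b\<^sup>2 / (a * g) + 1 > 0" "min a g > 0" "d / 2 > 0"
      using ag d by (auto intro: add_nonneg_pos)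
    fix z assume "z \<in> cball e (d / 2)"
    then have "dist z e < d" using d by (simp add: dist_commute)
    with near have "a \<le> \<alpha> z" "\<bar>\<beta> z\<bar> \<le> b" "\<gamma> z \<le> - g" by (auto simp: less_imp_le)
    then show "2 * (b\<^sup>2 / (a * g) + 1) * p z * (\<gamma> z * p z) + 2 * u z * (- \<alpha> z * u z + \<beta> z * p z)
        \<le> - min a g * ((b\<^sup>2 / (a * g) + 1) * (p z)\<^sup>2 + (u z)\<^sup>2)"
      using ag by (intro triangular_quadratic_form_le)
  qed
qed

lemma loc_asymp_stable_by_planar_quadratic_lyapunov:
  fixes F :: "real \<times> real \<Rightarrow> real \<times> real"
  assumes lip: "L-lipschitz_on (cball e r) F" and Fe: "F e = 0"
    and A: "A > 0" and B: "B > 0" and m: "m > 0" and r: "r > 0"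
    and decay: "\<And>z. z \<in> cball e r \<Longrightarrow>
       2 * A * (fst z - fst e) * fst (F z) + 2 * B * (snd z - snd e) * snd (F z)
         \<le> - m * (A * (fst z - fst e)\<^sup>2 + B * (snd z - snd e)\<^sup>2)"
  shows "loc_asymp_stable F e"
proof -
  have dist2: "(dist z e)\<^sup>2 = (fst z - fst e)\<^sup>2 + (snd z - snd e)\<^sup>2" for z :: "real \<times> real"
    by (cases z; cases e) (simp add: dist_Pair_Pair dist_real_def)
  interpret quadratic_lyapunov F e r L "\<lambda>z. A * (fst z - fst e)\<^sup>2 + B * (snd z - snd e)\<^sup>2"
    "\<lambda>z v. 2 * A * (fst z - fst e) * fst v + 2 * B * (snd z - snd e) * snd v" "min A B" "max A B" m
  proof
    show "((\<lambda>z. A * (fst z - fst e)\<^sup>2 + B * (snd z - snd e)\<^sup>2) has_derivative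
        (\<lambda>v. 2 * A * (fst z - fst e) * fst v + 2 * B * (snd z - snd e) * snd v)) (at z)" for z
      by (auto intro!: derivative_eq_intros simp: algebra_simps)
    show "min A B * (dist z e)\<^sup>2 \<le> A * (fst z - fst e)\<^sup>2 + B * (snd z - snd e)\<^sup>2"
      "A * (fst z - fst e)\<^sup>2 + B * (snd z - snd e)\<^sup>2 \<le> max A B * (dist z e)\<^sup>2" for z
      unfolding dist2 by (simp_all add: distrib_left add_mono mult_right_mono)
  qed (use lip Fe A B m r decay in auto)
  show ?thesis by (rule loc_asymp_stable)
qed

lemma loc_asymp_stable_triangular_fst:
  fixes F :: "real \<times> real \<Rightarrow> real \<times> real"
  assumes lip: "\<And>r. \<exists>L. L-lipschitz_on (cball e r) F" and Fe: "F e = 0"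
    and Ffst: "\<And>z. fst (F z) = \<gamma> z * (fst z - fst e)"
    and Fsnd: "\<And>z. snd (F z) = - \<alpha> z * (snd z - snd e) + \<beta> z * (fst z - fst e)"
    and "isCont \<alpha> e" and "isCont \<beta> e" and "isCont \<gamma> e" and "\<alpha> e > 0" and "\<gamma> e < 0"
  shows "loc_asymp_stable F e"
proof -
  obtain K m r where K: "K > 0" "m > 0" "r > 0" and decay: "\<And>z. z \<in> cball e r \<Longrightarrow>
       2 * K * (fst z - fst e) * (\<gamma> z * (fst z - fst e))
       + 2 * (snd z - snd e) * (- \<alpha> z * (snd z - snd e) + \<beta> z * (fst z - fst e))
         \<le> - m * (K * (fst z - fst e)\<^sup>2 + (snd z - snd e)\<^sup>2)"
    using triangular_lyapunov_near[OF assms(5-9), where p = "\<lambda>z. fst z - fst e" and u = "\<lambda>z. snd z - snd e"]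
    by blast
  obtain L where "L-lipschitz_on (cball e r) F" using lip by blast
  then show ?thesis
    by (rule loc_asymp_stable_by_planar_quadratic_lyapunov[where A = K and B = 1 and m = m])
      (use Fe K decay in \<open>simp_all add: Ffst Fsnd\<close>)
qed

lemma loc_asymp_stable_triangular_snd:
  fixes F :: "real \<times> real \<Rightarrow> real \<times> real"
  assumes lip: "\<And>r. \<exists>L. L-lipschitz_on (cball e r) F" and Fe: "F e = 0"
    and Fsnd: "\<And>z. snd (F z) = \<gamma> z * (snd z - snd e)"
    and Ffst: "\<And>z. fst (F z) = - \<alpha> z * (fst z - fst e) + \<beta> z * (snd z - snd e)"
    and "isCont \<alpha> e" and "isCont \<beta> e" and "isCont \<gamma> e" and "\<alpha> e > 0" and "\<gamma> e < 0"
  shows "loc_asymp_stable F e"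
proof -
  obtain K m r where K: "K > 0" "m > 0" "r > 0" and decay: "\<And>z. z \<in> cball e r \<Longrightarrow>
       2 * K * (snd z - snd e) * (\<gamma> z * (snd z - snd e))
       + 2 * (fst z - fst e) * (- \<alpha> z * (fst z - fst e) + \<beta> z * (snd z - snd e))
         \<le> - m * (K * (snd z - snd e)\<^sup>2 + (fst z - fst e)\<^sup>2)"
    using triangular_lyapunov_near[OF assms(5-9), where p = "\<lambda>z. snd z - snd e" and u = "\<lambda>z. fst z - fst e"]
    by blast
  obtain L where "L-lipschitz_on (cball e r) F" using lip by blast
  then show ?thesis
    by (rule loc_asymp_stable_by_planar_quadratic_lyapunov[where A = 1 and B = K and m = m])
      (use Fe K decay in \<open>simp_all add: Ffst Fsnd algebra_simps\<close>)
qed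

section \<open>The tree--grass field\<close>

lemma omega_has_real_derivative:
  assumes "alpha P \<noteq> 0"
  shows "(omega P has_real_derivative 2 * x * (alpha P)\<^sup>2 / (x\<^sup>2 + (alpha P)\<^sup>2)\<^sup>2) (at x)"
proof -
  have nz: "x\<^sup>2 + (alpha P)\<^sup>2 \<noteq> 0" using assms by (simp add: add_nonneg_pos)
  have "(omega P has_real_derivative
      (2 * x * (x\<^sup>2 + (alpha P)\<^sup>2) - x\<^sup>2 * (2 * x)) / ((x\<^sup>2 + (alpha P)\<^sup>2) * (x\<^sup>2 + (alpha P)\<^sup>2))) (at x)"
    unfolding omega_def using assms by (auto intro!: derivative_eq_intros simp: nz)
  then show ?thesis by (simp add: nz field_simps power2_eq_square)
qed

lemma vartheta_has_real_derivative:
  "(vartheta P has_real_derivative - (lamfTmax P - lamfTmin P) * pp P * exp (- pp P * x)) (at x)"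
  unfolding vartheta_def by (auto intro!: derivative_eq_intros simp: algebra_simps)

lemma continuous_jacobian_imp_lipschitz_on:
  fixes F :: "real \<times> real \<Rightarrow> real \<times> real" and a b c d :: "real \<times> real \<Rightarrow> real"
  assumes der: "\<And>z. (F has_derivative (\<lambda>h. (a z * fst h + b z * snd h, c z * fst h + d z * snd h))) (at z)"
    and cont: "continuous_on S a" "continuous_on S b" "continuous_on S c" "continuous_on S d"
    and S: "compact S" "convex S"
  shows "\<exists>L. L-lipschitz_on S F"
proof -
  define N where "N z = \<bar>a z\<bar> + \<bar>b z\<bar> + \<bar>c z\<bar> + \<bar>d z\<bar>" for z
  have "continuous_on S N"
    unfolding N_def by (intro continuous_intros cont)
  then have "bounded (N ` S)"
    by (intro compact_imp_bounded compact_continuous_image S(1))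
  then obtain B where B: "\<And>z. z \<in> S \<Longrightarrow> N z \<le> B"
    unfolding bounded_real by (meson abs_le_D1 imageI)
  have "(max B 0)-lipschitz_on S F"
  proof (rule bounded_derivative_imp_lipschitz[OF has_derivative_at_withinI[OF der] S(2)])
    fix z assume z: "z \<in> S"
    show "onorm (\<lambda>h. (a z * fst h + b z * snd h, c z * fst h + d z * snd h)) \<le> max B 0"
    proof (rule onorm_le)
      fix h :: "real \<times> real"
      have h: "\<bar>fst h\<bar> \<le> norm h" "\<bar>snd h\<bar> \<le> norm h"
        using norm_fst_le[of "fst h" "snd h"] norm_snd_le[of "snd h" "fst h"] by simp_all
      have "norm (a z * fst h + b z * snd h, c z * fst h + d z * snd h)
          \<le> \<bar>a z * fst h + b z * snd h\<bar> + \<bar>c z * fst h + d z * snd h\<bar>"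
        using norm_Pair_le[of "a z * fst h + b z * snd h" "c z * fst h + d z * snd h"] by simp
      also have "\<dots> \<le> \<bar>a z\<bar> * \<bar>fst h\<bar> + \<bar>b z\<bar> * \<bar>snd h\<bar> + (\<bar>c z\<bar> * \<bar>fst h\<bar> + \<bar>d z\<bar> * \<bar>snd h\<bar>)"
        by (intro add_mono order.trans[OF abs_triangle_ineq]) (auto simp: abs_mult)
      also have "\<dots> \<le> \<bar>a z\<bar> * norm h + \<bar>b z\<bar> * norm h + (\<bar>c z\<bar> * norm h + \<bar>d z\<bar> * norm h)"
        using h by (intro add_mono mult_left_mono) auto
      also have "\<dots> = N z * norm h"
        by (simp add: N_def algebra_simps)
      also have "\<dots> \<le> max B 0 * norm h"
        using B[OF z] by (intro mult_right_mono) auto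
      finally show "norm (a z * fst h + b z * snd h, c z * fst h + d z * snd h) \<le> max B 0 * norm h" .
    qed
  qed auto
  then show ?thesis by blast
qed

lemma KG_pos: "params_ok P \<Longrightarrow> KG P W > 0"
  unfolding params_ok_def KG_def by (simp add: add_pos_pos)

lemma KT_pos: "params_ok P \<Longrightarrow> KT P W > 0"
  unfolding params_ok_def KT_def by (simp add: add_pos_pos)

lemma gG_pos: "params_ok P \<Longrightarrow> W > 0 \<Longrightarrow> gG P W > 0"
  unfolding params_ok_def gG_def by simp

lemma gT_pos: "params_ok P \<Longrightarrow> W > 0 \<Longrightarrow> gT P W > 0"
  unfolding params_ok_def gT_def by simp

lemma field_has_derivative:
  assumes ok: "params_ok P"
  shows "(field P W f has_derivative (\<lambda>h.
     ((gG P W - 2 * gG P W * fst z / KG P W - deltaG P - etaTG P * snd z - lamfG P * f) * fst h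
        + (- etaTG P * fst z) * snd h,
      (- f * vartheta P (snd z) * snd z * (2 * fst z * (alpha P)\<^sup>2 / ((fst z)\<^sup>2 + (alpha P)\<^sup>2)\<^sup>2)) * fst h
        + (gT P W - 2 * gT P W * snd z / KT P W - deltaT P
           - f * omega P (fst z) * (vartheta P (snd z)
               - snd z * (lamfTmax P - lamfTmin P) * pp P * exp (- pp P * snd z))) * snd h))) (at z)"
proof -
  have "KG P W > 0" "KT P W > 0" "alpha P > 0"
    using ok KG_pos KT_pos by (auto simp: params_ok_def)
  then show ?thesis
    unfolding field_def Let_def
    by (intro has_derivative_Pair)
      (auto intro!: derivative_eq_intros DERIV_compose_FDERIV[OF vartheta_has_real_derivative]
        DERIV_compose_FDERIV[OF omega_has_real_derivative] simp: fun_eq_iff field_simps)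
qed

lemma field_lipschitz_on_cball:
  assumes ok: "params_ok P"
  shows "\<exists>L. L-lipschitz_on (cball e r) (field P W f)"
proof (rule continuous_jacobian_imp_lipschitz_on[OF field_has_derivative[OF ok]])
  have "KG P W > 0" "KT P W > 0" "alpha P > 0"
    using ok KG_pos KT_pos by (auto simp: params_ok_def)
  moreover have "x\<^sup>2 + (alpha P)\<^sup>2 \<noteq> 0" for x :: real
    using \<open>alpha P > 0\<close> by (simp add: add_nonneg_pos)
  ultimately show
    "continuous_on (cball e r) (\<lambda>z. gG P W - 2 * gG P W * fst z / KG P W - deltaG P - etaTG P * snd z - lamfG P * f)"
    "continuous_on (cball e r) (\<lambda>z. - etaTG P * fst z)"
    "continuous_on (cball e r) (\<lambda>z. - f * vartheta P (snd z) * snd z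
       * (2 * fst z * (alpha P)\<^sup>2 / ((fst z)\<^sup>2 + (alpha P)\<^sup>2)\<^sup>2))"
    "continuous_on (cball e r) (\<lambda>z. gT P W - 2 * gT P W * snd z / KT P W - deltaT P
       - f * omega P (fst z) * (vartheta P (snd z)
           - snd z * (lamfTmax P - lamfTmin P) * pp P * exp (- pp P * snd z)))"
    unfolding vartheta_def omega_def by (auto intro!: continuous_intros)
qed auto

definition grass_rate :: "params \<Rightarrow> real \<Rightarrow> real \<Rightarrow> real \<times> real \<Rightarrow> real" where
  "grass_rate P W f z = gG P W * (1 - fst z / KG P W) - deltaG P - etaTG P * snd z - lamfG P * f"

definition tree_rate :: "params \<Rightarrow> real \<Rightarrow> real \<Rightarrow> real \<times> real \<Rightarrow> real" where
  "tree_rate P W f z = gT P W * (1 - snd z / KT P W) - deltaT P - f * vartheta P (snd z) * omega P (fst z)"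

lemma fst_field: "fst (field P W f z) = grass_rate P W f z * fst z"
  by (simp add: field_def Let_def grass_rate_def algebra_simps)

lemma snd_field: "snd (field P W f z) = tree_rate P W f z * snd z"
  by (simp add: field_def Let_def tree_rate_def algebra_simps)

lemma isCont_grass_rate: "params_ok P \<Longrightarrow> isCont (grass_rate P W f) z"
  unfolding grass_rate_def using KG_pos[of P W] by (auto intro!: continuous_intros)

lemma isCont_tree_rate: "params_ok P \<Longrightarrow> isCont (tree_rate P W f) z"
  unfolding tree_rate_def vartheta_def omega_def using KT_pos[of P W]
  by (auto intro!: continuous_intros simp: params_ok_def add_nonneg_pos)

lemma desert_loc_asymp_stable:
  assumes ok: "params_ok P" and "R1W P W < 1" and "R2W P W f < 1" and "f > 0"
  shows "loc_asymp_stable (field P W f) (0, 0)"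
proof (rule loc_asymp_stable_triangular_fst[where \<gamma> = "grass_rate P W f"
      and \<alpha> = "\<lambda>z. - tree_rate P W f z" and \<beta> = "\<lambda>_. 0"])
  have "deltaG P + lamfG P * f > 0" "deltaT P > 0" using ok \<open>f > 0\<close> by (auto simp: params_ok_def add_pos_pos)
  then show "grass_rate P W f (0, 0) < 0" "- tree_rate P W f (0, 0) > 0"
    using assms(2,3) by (simp_all add: grass_rate_def tree_rate_def R1W_def R2W_def omega_def divide_less_eq)
qed (auto simp: fst_field snd_field prod_eq_iff field_lipschitz_on_cball ok
      isCont_grass_rate isCont_tree_rate intro!: continuous_intros)

lemma forest_loc_asymp_stable:
  assumes ok: "params_ok P" and W: "W > 0" and "R1W P W > 1" and "RF P W f < 1" and "f > 0"
  shows "loc_asymp_stable (field P W f) (0, Tstar P W)"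
proof -
  define T where "T = Tstar P W"
  have pos: "gT P W > 0" "KT P W > 0" "deltaT P > 0" "alpha P > 0" "etaTG P > 0" "deltaG P + lamfG P * f > 0"
    using ok gT_pos[OF ok W] KT_pos[OF ok] \<open>f > 0\<close> by (auto simp: params_ok_def add_pos_pos)
  have T_eq: "T = KT P W * (1 - deltaT P / gT P W)"
    by (simp add: T_def Tstar_def R1W_def)
  have T: "T > 0"
    using \<open>R1W P W > 1\<close> pos by (simp add: T_def Tstar_def)
  have tree: "tree_rate P W f z * snd z
      = - (snd z * gT P W / KT P W) * (snd z - T)
        + (- (snd z * f * vartheta P (snd z) * fst z / ((fst z)\<^sup>2 + (alpha P)\<^sup>2))) * fst z" for z
  proof -
    have logistic: "gT P W * (1 - snd z / KT P W) - deltaT P = - gT P W / KT P W * (snd z - T)"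
      using pos unfolding T_eq by (simp add: field_simps)
    have "omega P (fst z) = fst z * fst z / ((fst z)\<^sup>2 + (alpha P)\<^sup>2)"
      by (simp add: omega_def power2_eq_square)
    then show ?thesis
      unfolding tree_rate_def logistic by (simp add: algebra_simps)
  qed
  have "etaTG P * T + deltaG P + lamfG P * f > 0"
    using pos T mult_pos_pos[of "etaTG P" T] by linarith
  then have "gG P W < etaTG P * T + deltaG P + lamfG P * f"
    using \<open>RF P W f < 1\<close> by (simp add: RF_def T_def divide_less_eq)
  moreover have "field P W f (0, T) = 0"
    using tree[of "(0, T)"] T by (simp add: prod_eq_iff fst_field snd_field)
  ultimately have "loc_asymp_stable (field P W f) (0, T)"
  proof (intro loc_asymp_stable_triangular_fst[where \<gamma> = "grass_rate P W f"
        and \<alpha> = "\<lambda>z. snd z * gT P W / KT P W"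
        and \<beta> = "\<lambda>z. - (snd z * f * vartheta P (snd z) * fst z / ((fst z)\<^sup>2 + (alpha P)\<^sup>2))"])
    show "isCont (\<lambda>z. - (snd z * f * vartheta P (snd z) * fst z / ((fst z)\<^sup>2 + (alpha P)\<^sup>2))) (0, T)"
      unfolding vartheta_def using pos by (auto intro!: continuous_intros simp: add_nonneg_pos)
  qed (use T pos in \<open>auto simp: fst_field snd_field tree prod_eq_iff field_lipschitz_on_cball ok
      isCont_grass_rate grass_rate_def intro!: continuous_intros\<close>)
  then show ?thesis by (simp add: T_def)
qed

lemma grassland_loc_asymp_stable:
  assumes ok: "params_ok P" and W: "W > 0" and "R2W P W f > 1" and "RG P W f < 1" and "f > 0"
  shows "loc_asymp_stable (field P W f) (Gstar P W f, 0)"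
proof -
  define G where "G = Gstar P W f"
  have pos: "gG P W > 0" "KG P W > 0" "deltaG P + lamfG P * f > 0" "deltaT P > 0" "lamfTmax P > 0"
    using ok gG_pos[OF ok W] KG_pos[OF ok] \<open>f > 0\<close> by (auto simp: params_ok_def add_pos_pos)
  have G_eq: "G = KG P W * (1 - (deltaG P + lamfG P * f) / gG P W)"
    by (simp add: G_def Gstar_def R2W_def)
  have G: "G > 0"
    using \<open>R2W P W f > 1\<close> pos by (simp add: G_def Gstar_def)
  have grass: "grass_rate P W f z * fst z
      = - (fst z * gG P W / KG P W) * (fst z - G) + (- etaTG P * fst z) * snd z" for z
    using pos unfolding grass_rate_def G_eq by (simp add: field_simps)
  have "gT P W < deltaT P + lamfTmax P * f * omega P G"
    using \<open>RG P W f < 1\<close> pos \<open>f > 0\<close>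
    by (simp add: RG_def G_def divide_less_eq add_pos_nonneg omega_def)
  moreover have "field P W f (G, 0) = 0"
    using grass[of "(G, 0)"] G by (simp add: prod_eq_iff fst_field snd_field)
  ultimately have "loc_asymp_stable (field P W f) (G, 0)"
  proof (intro loc_asymp_stable_triangular_snd[where \<gamma> = "tree_rate P W f"
        and \<alpha> = "\<lambda>z. fst z * gG P W / KG P W" and \<beta> = "\<lambda>z. - etaTG P * fst z"])
    show "tree_rate P W f (G, 0) < 0"
      using \<open>gT P W < _\<close> by (simp add: tree_rate_def vartheta_def algebra_simps)
  qed (use G pos in \<open>auto simp: fst_field snd_field grass prod_eq_iff field_lipschitz_on_cball ok
        isCont_tree_rate intro!: continuous_intros\<close>)
  then show ?thesis by (simp add: G_def)
qed

theorem theorem2: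
  fixes P :: params and W f :: real
  assumes "params_ok P" and "W > 0" and "f > 0"
  shows "(R1W P W < 1 \<and> R2W P W f < 1 \<longrightarrow> loc_asymp_stable (field P W f) (0, 0))
       \<and> (R2W P W f > 1 \<and> RG P W f < 1 \<longrightarrow> loc_asymp_stable (field P W f) (Gstar P W f, 0))
       \<and> (R1W P W > 1 \<and> RF P W f < 1 \<longrightarrow> loc_asymp_stable (field P W f) (0, Tstar P W))"
  using desert_loc_asymp_stable grassland_loc_asymp_stable forest_loc_asymp_stable assms by blast

end
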